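(* Let $d\ge2$, $1\le r_p\le n_p$, let $f$ be a real-valued function differentiable on an open neighbourhood of $\Omega=\mathrm{St}(r_1,n_1,\mathbb{C})\times\cdots\times\mathrm{St}(r_d,n_d,\mathbb{C})$, and let $\tilde f=f\circ\rho$, where $\rho$ keeps the first $r_p$ columns of the $p$-th component. Let $\upsilon\in\Upsilon=\mathcal{U}_{n_1}\times\cdots\times\mathcal{U}_{n_d}$ and $\omega=\rho(\upsilon)\in\Omega$. Then $\operatorname{grad}\tilde f(\upsilon)=0$ if and only if $\operatorname{grad}f(\omega)=0$.
   Context: $\mathrm{St}(r,n,\mathbb{C})=\{X\in\mathbb{C}^{n\times r}:X^HX=I_r\}$, $\mathcal{U}_n=\mathrm{St}(n,n,\mathbb{C})$. Matrix spaces carry the real inner product $\mathrm{Re}\,\mathrm{tr}(X^HY)$, Euclidean gradient $\nabla F=\partial F/\partial X^{\Re}+\mathrm{i}\,\partial F/\partial X^{\Im}$, $\mathrm{skew}(P)=\frac12(P-P^H)$. For $g$ on a Stiefel manifold, $\operatorname{grad}g(X)=(I_n-XX^H)\nabla g(X)+X\,\mathrm{skew}(X^H\nabla g(X))$. For $\omega=(X^{(1)},\dots,X^{(d)})$, $\operatorname{grad}f(\omega)=(\operatorname{grad}g_{(1)}(X^{(1)}),\dots,\operatorname{grad}g_{(d)}(X^{(d)}))$, where $g_{(p)}$ is $f$ as a function of the $p$-th component with the others fixed; $\operatorname{grad}\tilde f(\upsilon)$ is defined in the same way blockwise on $\Upsilon$. *)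

theory Defs
  imports "HOL-Analysis.Analysis" "Jordan_Normal_Form.Matrix"
begin

definition ctrans :: "complex mat \<Rightarrow> complex mat" where
  "ctrans A = mat (dim_col A) (dim_row A) (\<lambda>(i,j). cnj (A $$ (j,i)))"

definition skew :: "complex mat \<Rightarrow> complex mat" where
  "skew P = (1/2 :: complex) \<cdot>\<^sub>m (P - ctrans P)"

definition prodspace :: "nat \<Rightarrow> (nat \<Rightarrow> nat) \<Rightarrow> (nat \<Rightarrow> nat) \<Rightarrow> complex mat list set" where
  "prodspace d m c = {ws. length ws = d \<and> (\<forall>p<d. ws ! p \<in> carrier_mat (m p) (c p))}"

definition stiefel_prod :: "nat \<Rightarrow> (nat \<Rightarrow> nat) \<Rightarrow> (nat \<Rightarrow> nat) \<Rightarrow> complex mat list set" where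
  "stiefel_prod d m c = {ws. ws \<in> prodspace d m c \<and>
      (\<forall>p<d. ctrans (ws ! p) * (ws ! p) = 1\<^sub>m (c p))}"

definition ladd :: "complex mat list \<Rightarrow> complex mat list \<Rightarrow> complex mat list" where
  "ladd xs ys = map2 (+) xs ys"

definition lsmult :: "complex \<Rightarrow> complex mat list \<Rightarrow> complex mat list" where
  "lsmult a xs = map (\<lambda>X. a \<cdot>\<^sub>m X) xs"

(* Frobenius norm w.r.t. the real inner product Re tr(X^H Y) *)
definition lnorm :: "nat \<Rightarrow> (nat \<Rightarrow> nat) \<Rightarrow> (nat \<Rightarrow> nat) \<Rightarrow> complex mat list \<Rightarrow> real" where
  "lnorm d m c xs = sqrt (\<Sum>p<d. \<Sum>i<m p. \<Sum>j<c p. (cmod (xs ! p $$ (i,j)))\<^sup>2)"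

definition lopen :: "nat \<Rightarrow> (nat \<Rightarrow> nat) \<Rightarrow> (nat \<Rightarrow> nat) \<Rightarrow> complex mat list set \<Rightarrow> bool" where
  "lopen d m c U \<longleftrightarrow> U \<subseteq> prodspace d m c \<and>
     (\<forall>x\<in>U. \<exists>e>0. \<forall>y\<in>prodspace d m c. lnorm d m c (ladd y (lsmult (-1) x)) < e \<longrightarrow> y \<in> U)"

definition ldifferentiable_at ::
  "nat \<Rightarrow> (nat \<Rightarrow> nat) \<Rightarrow> (nat \<Rightarrow> nat) \<Rightarrow> (complex mat list \<Rightarrow> real) \<Rightarrow> complex mat list \<Rightarrow> bool" where
  "ldifferentiable_at d m c F x \<longleftrightarrow>
     (\<exists>L :: complex mat list \<Rightarrow> real.
        (\<forall>y\<in>prodspace d m c. \<forall>z\<in>prodspace d m c. L (ladd y z) = L y + L z) \<and>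
        (\<forall>a::real. \<forall>y\<in>prodspace d m c. L (lsmult (complex_of_real a) y) = a * L y) \<and>
        (\<forall>e>0. \<exists>\<delta>>0. \<forall>h\<in>prodspace d m c. lnorm d m c h < \<delta> \<longrightarrow>
            \<bar>F (ladd x h) - F x - L h\<bar> \<le> e * lnorm d m c h))"

definition diff_on_open_nbhd ::
  "nat \<Rightarrow> (nat \<Rightarrow> nat) \<Rightarrow> (nat \<Rightarrow> nat) \<Rightarrow> (complex mat list \<Rightarrow> real) \<Rightarrow> complex mat list set \<Rightarrow> bool" where
  "diff_on_open_nbhd d m c F S \<longleftrightarrow>
     (\<exists>U. lopen d m c U \<and> S \<subseteq> U \<and> (\<forall>x\<in>U. ldifferentiable_at d m c F x))"

definition ldir :: "nat \<Rightarrow> (nat \<Rightarrow> nat) \<Rightarrow> (nat \<Rightarrow> nat) \<Rightarrow> nat \<Rightarrow> nat \<Rightarrow> nat \<Rightarrow> complex \<Rightarrow> complex mat list" where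
  "ldir d m c p i j z = map (\<lambda>q. if q = p
       then mat (m q) (c q) (\<lambda>(a,b). if a = i \<and> b = j then z else 0)
       else 0\<^sub>m (m q) (c q)) [0..<d]"

(* Euclidean gradient of F with respect to the p-th component:
   dF/dX^Re + i dF/dX^Im, entrywise via real partial derivatives *)
definition egrad ::
  "nat \<Rightarrow> (nat \<Rightarrow> nat) \<Rightarrow> (nat \<Rightarrow> nat) \<Rightarrow> (complex mat list \<Rightarrow> real) \<Rightarrow> complex mat list \<Rightarrow> nat \<Rightarrow> complex mat" where
  "egrad d m c F ws p = mat (m p) (c p) (\<lambda>(i,j).
      complex_of_real (deriv (\<lambda>t::real. F (ladd ws (ldir d m c p i j (complex_of_real t)))) 0)
      + \<i> * complex_of_real (deriv (\<lambda>t::real. F (ladd ws (ldir d m c p i j (\<i> * complex_of_real t)))) 0))"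

definition rgrad ::
  "nat \<Rightarrow> (nat \<Rightarrow> nat) \<Rightarrow> (nat \<Rightarrow> nat) \<Rightarrow> (complex mat list \<Rightarrow> real) \<Rightarrow> complex mat list \<Rightarrow> nat \<Rightarrow> complex mat" where
  "rgrad d m c F ws p =
     (let X = ws ! p; G = egrad d m c F ws p in
        (1\<^sub>m (m p) - X * ctrans X) * G + X * skew (ctrans X * G))"

definition rho :: "nat \<Rightarrow> (nat \<Rightarrow> nat) \<Rightarrow> (nat \<Rightarrow> nat) \<Rightarrow> complex mat list \<Rightarrow> complex mat list" where
  "rho d n r us = map (\<lambda>p. mat (n p) (r p) (\<lambda>(i,j). us ! p $$ (i,j))) [0..<d]"

end

(* Fix a component p and write X = upsilon_p (unitary), Y = omega_p for its first r_p columns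
   and G for the Euclidean gradient of f at omega in the p-th slot. Since rho ignores the last
   n_p - r_p columns, the Euclidean gradient of f o rho is G padded with zero columns, [G 0].
   At any point Y of a Stiefel manifold the Riemannian gradient vanishes iff Y^H G is Hermitian
   and (I - Y Y^H) G = 0; on the unitary group the second condition is void, so the gradient of
   f o rho vanishes iff X^H [G 0] = [X^H G 0] is Hermitian. Writing M = X^H G, both conditions
   say the same thing: the top r_p x r_p block of M is Hermitian and the bottom block vanishes. *)

theory Submission
  imports Defs "Jordan_Normal_Form.Determinant"
begin

lemma ctrans_carrier_mat [simp]: "A \<in> carrier_mat a b \<Longrightarrow> ctrans A \<in> carrier_mat b a"
  by (auto simp: ctrans_def)

lemma dim_ctrans [simp]: "dim_row (ctrans A) = dim_col A" "dim_col (ctrans A) = dim_row A"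
  by (auto simp: ctrans_def)

lemma index_ctrans [simp]:
  "i < dim_col A \<Longrightarrow> j < dim_row A \<Longrightarrow> ctrans A $$ (i,j) = cnj (A $$ (j,i))"
  by (auto simp: ctrans_def)

lemma index_ctrans_mult:
  assumes "A \<in> carrier_mat N a" "B \<in> carrier_mat N b" "i < a" "j < b"
  shows "(ctrans A * B) $$ (i,j) = (\<Sum>k<N. cnj (A $$ (k,i)) * B $$ (k,j))"
  using assms by (simp add: scalar_prod_def atLeast0LessThan)

lemma skew_carrier_mat [simp]: "A \<in> carrier_mat a a \<Longrightarrow> skew A \<in> carrier_mat a a"
  by (auto simp: skew_def)

lemma dim_skew [simp]: "dim_row (skew A) = dim_col A" "dim_col (skew A) = dim_row A"
  by (auto simp: skew_def)

lemma index_skew: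
  "A \<in> carrier_mat a a \<Longrightarrow> i < a \<Longrightarrow> j < a \<Longrightarrow>
   skew A $$ (i,j) = 1/2 * (A $$ (i,j) - cnj (A $$ (j,i)))"
  by (auto simp: skew_def)

definition hermitian :: "complex mat \<Rightarrow> bool" where
  "hermitian A \<longleftrightarrow> ctrans A = A"

lemma hermitian_iff_index:
  assumes A: "A \<in> carrier_mat a a"
  shows "hermitian A \<longleftrightarrow> (\<forall>i<a. \<forall>j<a. A $$ (i,j) = cnj (A $$ (j,i)))"
  unfolding hermitian_def
proof
  assume "ctrans A = A"
  then show "\<forall>i<a. \<forall>j<a. A $$ (i,j) = cnj (A $$ (j,i))"
    using A by (metis carrier_matD index_ctrans)
next
  assume H: "\<forall>i<a. \<forall>j<a. A $$ (i,j) = cnj (A $$ (j,i))"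
  show "ctrans A = A"
  proof (rule eq_matI)
    fix i j assume "i < dim_row A" "j < dim_col A"
    then show "ctrans A $$ (i,j) = A $$ (i,j)"
      using A H by (metis carrier_matD complex_cnj_cnj index_ctrans)
  qed (use A in auto)
qed

lemma skew_eq_0_iff_hermitian:
  assumes A: "A \<in> carrier_mat a a"
  shows "skew A = 0\<^sub>m a a \<longleftrightarrow> hermitian A"
proof -
  have "skew A = 0\<^sub>m a a \<longleftrightarrow> (\<forall>i<a. \<forall>j<a. skew A $$ (i,j) = 0)"
    using A by (auto simp: mat_eq_iff)
  also have "\<dots> \<longleftrightarrow> (\<forall>i<a. \<forall>j<a. A $$ (i,j) = cnj (A $$ (j,i)))"
    using A by (simp add: index_skew)
  finally show ?thesis
    using hermitian_iff_index[OF A] by simp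
qed

lemma unitary_right_inverse:
  assumes "X \<in> carrier_mat N N" "ctrans X * X = 1\<^sub>m N"
  shows "X * ctrans X = 1\<^sub>m N"
  using mat_mult_left_right_inverse[of "ctrans X" N X] assms by simp

lemma ctrans_unitary_mult_eq_0_iff:
  assumes X: "X \<in> carrier_mat N N" and XX: "ctrans X * X = 1\<^sub>m N"
    and B: "B \<in> carrier_mat N c"
  shows "ctrans X * B = 0\<^sub>m N c \<longleftrightarrow> B = 0\<^sub>m N c"
proof
  assume "ctrans X * B = 0\<^sub>m N c"
  then have "X * (ctrans X * B) = 0\<^sub>m N c" using X by simp
  moreover have "X * (ctrans X * B) = B"
    using assoc_mult_mat[of X N N "ctrans X" N B c] unitary_right_inverse[OF X XX] X B by simp
  ultimately show "B = 0\<^sub>m N c" by simp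
qed (use X in simp)

definition stiefel_grad :: "complex mat \<Rightarrow> complex mat \<Rightarrow> complex mat" where
  "stiefel_grad X G = (1\<^sub>m (dim_row X) - X * ctrans X) * G + X * skew (ctrans X * G)"

lemma rgrad_eq_stiefel_grad:
  assumes "ws \<in> prodspace d m c" "p < d"
  shows "rgrad d m c F ws p = stiefel_grad (ws ! p) (egrad d m c F ws p)"
proof -
  have "ws ! p \<in> carrier_mat (m p) (c p)" using assms by (simp add: prodspace_def)
  then show ?thesis by (simp add: rgrad_def stiefel_grad_def Let_def)
qed

lemma orth_proj_mult:
  assumes Y: "Y \<in> carrier_mat N R" and G: "G \<in> carrier_mat N c"
  shows "(1\<^sub>m N - Y * ctrans Y) * G = G - Y * (ctrans Y * G)"
  using minus_mult_distrib_mat[of "1\<^sub>m N" N N "Y * ctrans Y" G c] ctrans_carrier_mat[OF Y] Y G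
  by simp

lemma stiefel_grad_eq_0_iff:
  assumes Y: "Y \<in> carrier_mat N R" and YY: "ctrans Y * Y = 1\<^sub>m R"
    and G: "G \<in> carrier_mat N R"
  shows "stiefel_grad Y G = 0\<^sub>m N R \<longleftrightarrow>
    hermitian (ctrans Y * G) \<and> (1\<^sub>m N - Y * ctrans Y) * G = 0\<^sub>m N R"
proof -
  define P where "P = (1\<^sub>m N - Y * ctrans Y) * G"
  define K where "K = skew (ctrans Y * G)"
  have YH: "ctrans Y \<in> carrier_mat R N" using Y by simp
  have YG: "ctrans Y * G \<in> carrier_mat R R" using YH G by simp
  have P: "P \<in> carrier_mat N R"
    unfolding P_def by (rule mult_carrier_mat[OF minus_carrier_mat]) (use Y G in auto)
  have K: "K \<in> carrier_mat R R" using YH G by (simp add: K_def)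
  have grad: "stiefel_grad Y G = P + Y * K"
    using Y by (simp add: stiefel_grad_def P_def K_def)
  have "P = G - Y * (ctrans Y * G)"
    unfolding P_def by (rule orth_proj_mult[OF Y G])
  moreover have "ctrans Y * (Y * (ctrans Y * G)) = ctrans Y * G"
    by (subst assoc_mult_mat[symmetric]) (use Y YH G YY in auto)
  ultimately have YP: "ctrans Y * P = 0\<^sub>m R R"
    using mult_minus_distrib_mat[of "ctrans Y" R N G R "Y * (ctrans Y * G)"] Y YH G YG by simp
  have "ctrans Y * (Y * K) = K"
    by (subst assoc_mult_mat[symmetric]) (use Y YH K YY in auto)
  then have "ctrans Y * stiefel_grad Y G = K"
    using mult_add_distrib_mat[of "ctrans Y" R N P R "Y * K"] Y YH P K YP by (simp add: grad)
  then have "stiefel_grad Y G = 0\<^sub>m N R \<longleftrightarrow> K = 0\<^sub>m R R \<and> P = 0\<^sub>m N R"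
    using Y K P by (auto simp: grad)
  then show ?thesis
    using skew_eq_0_iff_hermitian[of "ctrans Y * G" R] YH G by (simp add: K_def P_def)
qed

lemma unitary_stiefel_grad_eq_0_iff:
  assumes X: "X \<in> carrier_mat N N" and XX: "ctrans X * X = 1\<^sub>m N"
    and G: "G \<in> carrier_mat N N"
  shows "stiefel_grad X G = 0\<^sub>m N N \<longleftrightarrow> hermitian (ctrans X * G)"
  using stiefel_grad_eq_0_iff[OF X XX G] unitary_right_inverse[OF X XX] G
  by (simp add: minus_r_inv_mat[OF one_carrier_mat])

definition pad_cols :: "nat \<Rightarrow> 'a :: zero mat \<Rightarrow> 'a mat" where
  "pad_cols N G = mat (dim_row G) N (\<lambda>(i,j). if j < dim_col G then G $$ (i,j) else 0)"

lemma dim_pad_cols [simp]: "dim_row (pad_cols N G) = dim_row G" "dim_col (pad_cols N G) = N"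
  by (simp_all add: pad_cols_def)

lemma pad_cols_carrier_mat [simp]: "G \<in> carrier_mat a b \<Longrightarrow> pad_cols N G \<in> carrier_mat a N"
  by (simp add: pad_cols_def)

lemma index_pad_cols [simp]:
  "i < dim_row G \<Longrightarrow> j < N \<Longrightarrow> pad_cols N G $$ (i,j) = (if j < dim_col G then G $$ (i,j) else 0)"
  by (simp add: pad_cols_def)

lemma mult_pad_cols:
  fixes A G :: "'a :: semiring_0 mat"
  assumes "dim_col A = dim_row G"
  shows "A * pad_cols N G = pad_cols N (A * G)"
  using assms by (intro eq_matI) (auto simp: pad_cols_def scalar_prod_def)

lemma hermitian_pad_cols_iff:
  assumes M: "M \<in> carrier_mat N R" and RN: "R \<le> N"
  shows "hermitian (pad_cols N M) \<longleftrightarrow>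
    (\<forall>i<R. \<forall>j<R. M $$ (i,j) = cnj (M $$ (j,i))) \<and> (\<forall>i<N. \<forall>j<R. R \<le> i \<longrightarrow> M $$ (i,j) = 0)"
    (is "_ \<longleftrightarrow> ?rhs")
proof -
  have "hermitian (pad_cols N M) \<longleftrightarrow>
    (\<forall>i<N. \<forall>j<N. (if j < R then M $$ (i,j) else 0) = cnj (if i < R then M $$ (j,i) else 0))"
  proof -
    have "pad_cols N M $$ (i,j) = (if j < R then M $$ (i,j) else 0)" if "i < N" "j < N" for i j
      using M that by simp
    then show ?thesis
      unfolding hermitian_iff_index[OF pad_cols_carrier_mat[OF M]] by (intro all_cong imp_cong) auto
  qed
  also have "\<dots> \<longleftrightarrow> ?rhs"
  proof
    assume H: "\<forall>i<N. \<forall>j<N. (if j < R then M $$ (i,j) else 0) = cnj (if i < R then M $$ (j,i) else 0)"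
    have "M $$ (i,j) = (if i < R then cnj (M $$ (j,i)) else 0)" if "i < N" "j < R" for i j
      using H that RN by (smt (verit) complex_cnj_zero order_less_le_trans)
    then show ?rhs
      using RN by (metis complex_cnj_cnj not_le order_less_le_trans)
  next
    assume ?rhs
    then show "\<forall>i<N. \<forall>j<N. (if j < R then M $$ (i,j) else 0) = cnj (if i < R then M $$ (j,i) else 0)"
      by (metis complex_cnj_cnj complex_cnj_zero not_le)
  qed
  finally show ?thesis .
qed

definition take_cols :: "nat \<Rightarrow> 'a mat \<Rightarrow> 'a mat" where
  "take_cols R X = mat (dim_row X) R (\<lambda>(i,j). X $$ (i,j))"

lemma dim_take_cols [simp]: "dim_row (take_cols R X) = dim_row X" "dim_col (take_cols R X) = R"
  by (simp_all add: take_cols_def)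

lemma take_cols_carrier_mat [simp]: "X \<in> carrier_mat N c \<Longrightarrow> take_cols R X \<in> carrier_mat N R"
  by (auto simp: take_cols_def)

lemma index_take_cols [simp]: "i < dim_row X \<Longrightarrow> j < R \<Longrightarrow> take_cols R X $$ (i,j) = X $$ (i,j)"
  by (simp add: take_cols_def)

lemma index_ctrans_take_cols_mult:
  assumes X: "X \<in> carrier_mat N c" and G: "G \<in> carrier_mat N b" and "R \<le> c" "i < R" "j < b"
  shows "(ctrans (take_cols R X) * G) $$ (i,j) = (ctrans X * G) $$ (i,j)"
  using index_ctrans_mult[of "take_cols R X" N R G b i j] index_ctrans_mult[OF X G, of i j] assms
  by simp

lemma index_ctrans_unitary_mult_take_cols:
  assumes X: "X \<in> carrier_mat N N" and XX: "ctrans X * X = 1\<^sub>m N" and "R \<le> N" "i < N" "j < R"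
  shows "(ctrans X * take_cols R X) $$ (i,j) = (if i = j then 1 else 0)"
proof -
  have "(ctrans X * take_cols R X) $$ (i,j) = (ctrans X * X) $$ (i,j)"
    using index_ctrans_mult[OF X, of "take_cols R X" R i j] index_ctrans_mult[OF X X, of i j] assms
    by simp
  then show ?thesis using XX assms by simp
qed

lemma take_cols_unitary_orthonormal:
  assumes X: "X \<in> carrier_mat N N" and XX: "ctrans X * X = 1\<^sub>m N" and RN: "R \<le> N"
  shows "ctrans (take_cols R X) * take_cols R X = 1\<^sub>m R"
proof (rule eq_matI)
  fix i j assume "i < dim_row (1\<^sub>m R :: complex mat)" "j < dim_col (1\<^sub>m R :: complex mat)"
  then show "(ctrans (take_cols R X) * take_cols R X) $$ (i,j) = 1\<^sub>m R $$ (i,j)"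
    using index_ctrans_take_cols_mult[OF X take_cols_carrier_mat[OF X, of R] RN]
      index_ctrans_unitary_mult_take_cols[OF X XX RN, of i j] RN by simp
qed (use X in simp_all)

lemma take_cols_orth_proj_eq_0_iff:
  assumes X: "X \<in> carrier_mat N N" and XX: "ctrans X * X = 1\<^sub>m N"
    and G: "G \<in> carrier_mat N R" and RN: "R \<le> N"
  defines "Y \<equiv> take_cols R X"
  shows "(1\<^sub>m N - Y * ctrans Y) * G = 0\<^sub>m N R \<longleftrightarrow>
    (\<forall>i<N. \<forall>j<R. R \<le> i \<longrightarrow> (ctrans X * G) $$ (i,j) = 0)"
proof -
  define M where "M = ctrans X * G"
  define D where "D = ctrans X * Y"
  define A where "A = ctrans Y * G"
  have XH: "ctrans X \<in> carrier_mat N N" and Y: "Y \<in> carrier_mat N R"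
    using X by (simp_all add: Y_def)
  have M: "M \<in> carrier_mat N R" and D: "D \<in> carrier_mat N R"
    using XH Y G by (simp_all add: M_def D_def)
  have A: "A \<in> carrier_mat R R"
    unfolding A_def using ctrans_carrier_mat[OF Y] G by (rule mult_carrier_mat)
  have "ctrans X * ((1\<^sub>m N - Y * ctrans Y) * G) = M - D * A"
    using mult_minus_distrib_mat[OF XH G, of "Y * A"] Y A XH
    by (simp add: orth_proj_mult[OF Y G] M_def D_def A_def)
  \<comment> \<open>D = X^H Y consists of the first R columns of the identity, so D A = D (Y^H G) is the
    top R x R block of M padded with zero rows.\<close>
  moreover have "(D * A) $$ (i,j) = (if i < R then M $$ (i,j) else 0)" if "i < N" "j < R" for i j
  proof -
    have "(D * A) $$ (i,j) = (\<Sum>k<R. D $$ (i,k) * A $$ (k,j))"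
      using that D A by (simp add: scalar_prod_def atLeast0LessThan)
    also have "\<dots> = (\<Sum>k<R. if i = k then M $$ (k,j) else 0)"
      using index_ctrans_unitary_mult_take_cols[OF X XX RN \<open>i < N\<close>]
        index_ctrans_take_cols_mult[OF X G RN _ \<open>j < R\<close>]
      by (intro sum.cong) (simp_all add: D_def A_def M_def Y_def)
    finally show ?thesis by simp
  qed
  ultimately have "ctrans X * ((1\<^sub>m N - Y * ctrans Y) * G) = 0\<^sub>m N R \<longleftrightarrow>
      (\<forall>i<N. \<forall>j<R. R \<le> i \<longrightarrow> M $$ (i,j) = 0)"
    using M D A by (auto simp: mat_eq_iff)
  moreover have "(1\<^sub>m N - Y * ctrans Y) * G \<in> carrier_mat N R"
    by (rule mult_carrier_mat[OF minus_carrier_mat]) (use Y G in auto)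
  ultimately show ?thesis
    using ctrans_unitary_mult_eq_0_iff[OF X XX] by (simp add: M_def)
qed

lemma stiefel_grad_pad_cols_eq_0_iff:
  assumes X: "X \<in> carrier_mat N N" and XX: "ctrans X * X = 1\<^sub>m N"
    and G: "G \<in> carrier_mat N R" and RN: "R \<le> N"
  shows "stiefel_grad X (pad_cols N G) = 0\<^sub>m N N \<longleftrightarrow> stiefel_grad (take_cols R X) G = 0\<^sub>m N R"
proof -
  let ?M = "ctrans X * G" and ?Y = "take_cols R X"
  have M: "?M \<in> carrier_mat N R"
    using mult_carrier_mat[OF ctrans_carrier_mat[OF X] G] .
  have YG: "ctrans ?Y * G \<in> carrier_mat R R"
    using mult_carrier_mat[OF ctrans_carrier_mat[OF take_cols_carrier_mat[OF X]] G] .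
  have "stiefel_grad X (pad_cols N G) = 0\<^sub>m N N \<longleftrightarrow> hermitian (pad_cols N ?M)"
    using unitary_stiefel_grad_eq_0_iff[OF X XX, of "pad_cols N G"] mult_pad_cols[of "ctrans X" G N] X G
    by simp
  also have "\<dots> \<longleftrightarrow> (\<forall>i<R. \<forall>j<R. ?M $$ (i,j) = cnj (?M $$ (j,i))) \<and>
      (\<forall>i<N. \<forall>j<R. R \<le> i \<longrightarrow> ?M $$ (i,j) = 0)"
    by (rule hermitian_pad_cols_iff[OF M RN])
  also have "\<dots> \<longleftrightarrow> hermitian (ctrans ?Y * G) \<and> (1\<^sub>m N - ?Y * ctrans ?Y) * G = 0\<^sub>m N R"
    using hermitian_iff_index[OF YG] index_ctrans_take_cols_mult[OF X G RN]
      take_cols_orth_proj_eq_0_iff[OF X XX G RN] by simp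
  also have "\<dots> \<longleftrightarrow> stiefel_grad ?Y G = 0\<^sub>m N R"
    using stiefel_grad_eq_0_iff[OF take_cols_carrier_mat[OF X] take_cols_unitary_orthonormal[OF X XX RN] G]
    by simp
  finally show ?thesis .
qed

lemma rho_in_prodspace: "rho d n r us \<in> prodspace d n r"
  by (simp add: rho_def prodspace_def)

lemma nth_rho:
  assumes "us \<in> prodspace d n n" "p < d"
  shows "rho d n r us ! p = take_cols (r p) (us ! p)"
proof -
  have "us ! p \<in> carrier_mat (n p) (n p)" using assms by (simp add: prodspace_def)
  then show ?thesis using assms(2) by (simp add: rho_def take_cols_def)
qed

lemma rho_ladd_ldir:
  assumes us: "us \<in> prodspace d n n" and rn: "\<forall>q<d. r q \<le> n q" and p: "p < d"
  shows "rho d n r (ladd us (ldir d n n p i j z)) =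
    (if j < r p then ladd (rho d n r us) (ldir d n r p i j z) else rho d n r us)"
proof -
  have len: "length us = d" and cu: "\<And>q. q < d \<Longrightarrow> us ! q \<in> carrier_mat (n q) (n q)"
    using us by (auto simp: prodspace_def)
  show ?thesis
  proof (cases "j < r p")
    case True
    show ?thesis using True p rn cu
      by (intro nth_equalityI) (auto simp: rho_def ladd_def ldir_def len intro!: eq_matI)
  next
    case False
    have "mat (n q) (r q) (\<lambda>(a,b). ladd us (ldir d n n p i j z) ! q $$ (a,b)) =
        mat (n q) (r q) (\<lambda>(a,b). us ! q $$ (a,b))" if q: "q < d" for q
      using q False rn cu[OF q]
      by (cases "q = p") (auto simp: ladd_def ldir_def len intro!: eq_matI)
    then show ?thesis
      using False by (simp add: rho_def)
  qed
qed

lemma egrad_comp_rho: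
  assumes us: "us \<in> prodspace d n n" and rn: "\<forall>q<d. r q \<le> n q" and p: "p < d"
  shows "egrad d n n (F \<circ> rho d n r) us p = pad_cols (n p) (egrad d n r F (rho d n r us) p)"
  using rho_ladd_ldir[OF us rn p] by (intro eq_matI) (auto simp: egrad_def)

theorem corollary2p8:
  fixes d :: nat and n r :: "nat \<Rightarrow> nat"
    and f :: "complex mat list \<Rightarrow> real"
    and \<upsilon> \<omega> :: "complex mat list"
  assumes "d \<ge> 2"
    and "\<forall>p<d. 1 \<le> r p \<and> r p \<le> n p"
    and "diff_on_open_nbhd d n r f (stiefel_prod d n r)"
    and "\<upsilon> \<in> stiefel_prod d n n"
    and "\<omega> = rho d n r \<upsilon>"
  shows "(\<forall>p<d. rgrad d n n (f \<circ> rho d n r) \<upsilon> p = 0\<^sub>m (n p) (n p))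
     \<longleftrightarrow> (\<forall>p<d. rgrad d n r f \<omega> p = 0\<^sub>m (n p) (r p))"
proof -
  have rn: "\<forall>p<d. r p \<le> n p" using assms(2) by simp
  have us: "\<upsilon> \<in> prodspace d n n" using assms(4) by (simp add: stiefel_prod_def)
  have "rgrad d n n (f \<circ> rho d n r) \<upsilon> p = 0\<^sub>m (n p) (n p) \<longleftrightarrow> rgrad d n r f \<omega> p = 0\<^sub>m (n p) (r p)"
    if p: "p < d" for p
  proof -
    have X: "\<upsilon> ! p \<in> carrier_mat (n p) (n p)" using us p by (simp add: prodspace_def)
    have XX: "ctrans (\<upsilon> ! p) * \<upsilon> ! p = 1\<^sub>m (n p)" using assms(4) p by (simp add: stiefel_prod_def)
    have G: "egrad d n r f \<omega> p \<in> carrier_mat (n p) (r p)" by (simp add: egrad_def)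
    show ?thesis
      using stiefel_grad_pad_cols_eq_0_iff[OF X XX G] rn p
      by (simp add: rgrad_eq_stiefel_grad[OF us p] rgrad_eq_stiefel_grad[OF rho_in_prodspace p]
          egrad_comp_rho[OF us rn p] nth_rho[OF us p] assms(5))
  qed
  then show ?thesis by blast
qed

end
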